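(* Let $H\in(0,1)$ with $H\neq1/2$, $T>0$, and let $X=S^H$ be a sub-fractional Brownian motion with index $H$. Then (a) $\displaystyle\lim_{h\to0+}\sup_{h\le t\le T-h}\Big|\frac{\mathbb{E}(X_{t+h}-2X_t+X_{t-h})^2}{h^{2H}}-(4-2^{2H})\Big|>0$; (b) for every $\varphi\in\Psi$, $\displaystyle\lim_{h\to0+}\sup_{\varphi(h)\le t\le T-h}\Big|\frac{\mathbb{E}(X_{t+h}-2X_t+X_{t-h})^2}{h^{2H}}-(4-2^{2H})\Big|=0$.
   Context: A sub-fractional Brownian motion with index $H\in(0,1)$ is a mean zero Gaussian process $(S^H_t)_{t\ge0}$ with covariance $G_H(s,t)=s^{2H}+t^{2H}-\tfrac12[(s+t)^{2H}+|s-t|^{2H}]$. $\Psi$ is the class of continuous $\varphi\colon(0,T]\to[0,\infty)$ with $\varphi(h)\to0$, $L(h):=\varphi(h)/h\to\infty$, $hL(h)^3\to0$ as $h\downarrow0$. *)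

theory Defs
  imports "HOL-Probability.Probability"
begin

definition subfbm_cov :: "real \<Rightarrow> real \<Rightarrow> real \<Rightarrow> real" where
  "subfbm_cov H s t = s powr (2*H) + t powr (2*H)
      - (1/2) * ((s + t) powr (2*H) + \<bar>s - t\<bar> powr (2*H))"

definition gaussian_rv :: "'a measure \<Rightarrow> ('a \<Rightarrow> real) \<Rightarrow> bool" where
  "gaussian_rv M Y \<longleftrightarrow>
     (\<exists>\<mu> \<sigma>. 0 < \<sigma> \<and> distributed M lborel Y (normal_density \<mu> \<sigma>))
     \<or> (\<exists>a. AE \<omega> in M. Y \<omega> = a)"

definition sub_fbm :: "'a measure \<Rightarrow> real \<Rightarrow> (real \<Rightarrow> 'a \<Rightarrow> real) \<Rightarrow> bool" where
  "sub_fbm M H X \<longleftrightarrow>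
     prob_space M
   \<and> (\<forall>t\<ge>0. X t \<in> borel_measurable M \<and> integrable M (\<lambda>\<omega>. (X t \<omega>)\<^sup>2)
            \<and> integral\<^sup>L M (X t) = 0)
   \<and> (\<forall>s\<ge>0. \<forall>t\<ge>0. integral\<^sup>L M (\<lambda>\<omega>. X s \<omega> * X t \<omega>) = subfbm_cov H s t)
   \<and> (\<forall>I c. finite I \<and> I \<subseteq> {0..} \<longrightarrow> gaussian_rv M (\<lambda>\<omega>. \<Sum>t\<in>I. c t * X t \<omega>))"

definition Psi :: "real \<Rightarrow> (real \<Rightarrow> real) set" where
  "Psi T = {\<phi>. continuous_on {0<..T} \<phi>
     \<and> (\<forall>h\<in>{0<..T}. 0 \<le> \<phi> h)
     \<and> (\<phi> \<longlongrightarrow> 0) (at_right 0)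
     \<and> filterlim (\<lambda>h. \<phi> h / h) at_top (at_right 0)
     \<and> ((\<lambda>h. h * (\<phi> h / h) ^ 3) \<longlongrightarrow> 0) (at_right 0)}"

end

theory Submission
  imports Defs "HOL-Real_Asymp.Real_Asymp"
begin

text \<open>
  For \<open>0 < h \<le> t\<close> the covariance gives
  \<open>E(X(t+h) - 2X(t) + X(t-h))\<^sup>2 / h\<^sup>2\<^sup>H = (4 - 2\<^sup>2\<^sup>H) - \<Delta>(2t/h)/2\<close>, where \<open>\<Delta>(x)\<close> is the
  fourth central difference of \<open>y \<mapsto> y\<^sup>2\<^sup>H\<close> at \<open>x\<close>; it comes from the term \<open>-(s+t)\<^sup>2\<^sup>H/2\<close>
  of the covariance, the fractional Brownian terms giving the constant. Substituting
  \<open>x = 2t/h\<close>, the supremum over \<open>t \<in> [a, T-h]\<close> is the supremum of \<open>|\<Delta>|/2\<close> over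
  \<open>[2a/h, 2(T-h)/h]\<close>. Since \<open>\<Delta>(x) \<sim> p(p-1)(p-2)(p-3) x\<^sup>p\<^sup>-\<^sup>4\<close> with \<open>p = 2H \<noteq> 1\<close>, \<open>\<Delta>\<close>
  tends to \<open>0\<close> at infinity without vanishing identically. For \<open>a = h\<close> the supremum
  therefore tends to the positive number \<open>sup\<^sub>x\<^sub>\<ge>\<^sub>2 |\<Delta>(x)|/2\<close>; for \<open>a = \<phi>(h)\<close> the left
  end point \<open>2\<phi>(h)/h\<close> tends to infinity and the supremum tends to \<open>0\<close>.
\<close>

definition fourth_difference :: "real \<Rightarrow> real \<Rightarrow> real" where
  "fourth_difference p x =
     (x+2) powr p - 4*(x+1) powr p + 6*x powr p - 4*(x-1) powr p + (x-2) powr p"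

lemma tendsto_fourth_difference_at_top:
  assumes "0 < p" "p < 2" "p \<noteq> 1"
  shows "(fourth_difference p \<longlongrightarrow> 0) at_top"
  \<comment> \<open>\<open>real_asymp\<close> needs to know the sign of \<open>p - 1\<close>\<close>
proof (cases "p < 1")
  case True
  then show ?thesis unfolding fourth_difference_def using assms by real_asymp
next
  case False
  then have "1 < p" using assms by auto
  then show ?thesis unfolding fourth_difference_def using assms by real_asymp
qed

lemma eventually_fourth_difference_nonzero:
  assumes "0 < p" "p < 2" "p \<noteq> 1"
  shows "eventually (\<lambda>x. fourth_difference p x \<noteq> 0) at_top"
proof -
  have lim: "((\<lambda>x. x powr (4-p) * fourth_difference p x) \<longlongrightarrow> p*(p-1)*(p-2)*(p-3)) at_top"
  proof (cases "p < 1")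
    case True
    then show ?thesis unfolding fourth_difference_def using assms by real_asymp
  next
    case False
    then have "1 < p" using assms by auto
    then show ?thesis unfolding fourth_difference_def using assms by real_asymp
  qed
  have "p*(p-1)*(p-2)*(p-3) \<noteq> 0" using assms by auto
  from tendsto_imp_eventually_ne[OF lim this] show ?thesis
    by (rule eventually_mono) auto
qed

lemma abs_fourth_difference_le:
  assumes "0 \<le> p" "2 \<le> x"
  shows "\<bar>fourth_difference p x\<bar> \<le> 16 * (x+2) powr p"
proof -
  have le: "(x+k) powr p \<le> (x+2) powr p" if "-2 \<le> k" "k \<le> 2" for k
    using assms that by (intro powr_mono2) auto
  have "0 \<le> (x+k) powr p" for k
    by simp
  then show ?thesis
    using le[of 1] le[of 0] le[of "-1"] le[of "-2"]
    unfolding fourth_difference_def abs_le_iff by (intro conjI; simp; smt (verit))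
qed

lemma bdd_above_abs_fourth_difference:
  assumes "0 < p" "p < 2" "p \<noteq> 1"
  shows "bdd_above ((\<lambda>x. \<bar>fourth_difference p x\<bar>) ` {2..})"
proof -
  obtain x0 where x0: "\<And>x. x \<ge> x0 \<Longrightarrow> \<bar>fourth_difference p x\<bar> < 1"
    using tendstoD[OF tendsto_fourth_difference_at_top[OF assms], of 1]
    by (auto simp: eventually_at_top_linorder)
  have "\<bar>fourth_difference p x\<bar> \<le> max 1 (16 * (x0+2) powr p)" if "2 \<le> x" for x
  proof (cases "x \<ge> x0")
    case True
    then show ?thesis using x0 by force
  next
    case False
    have "\<bar>fourth_difference p x\<bar> \<le> 16 * (x+2) powr p"
      using abs_fourth_difference_le assms that by simp
    also have "\<dots> \<le> 16 * (x0+2) powr p"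
      using False that assms by (simp add: powr_mono2)
    finally show ?thesis by simp
  qed
  then show ?thesis by (intro bdd_aboveI2) auto
qed

lemma subfbm_cov_second_difference:
  assumes "0 < h" "h \<le> t" "0 < H"
  shows "subfbm_cov H (t+h) (t+h) + 4 * subfbm_cov H t t + subfbm_cov H (t-h) (t-h)
      - 4 * subfbm_cov H (t+h) t + 2 * subfbm_cov H (t+h) (t-h) - 4 * subfbm_cov H t (t-h)
    = h powr (2*H) * ((4 - 2 powr (2*H)) - fourth_difference (2*H) (2*t/h) / 2)"
proof -
  define x where "x = 2*t/h"
  have scale: "(2*t + k*h) powr (2*H) = h powr (2*H) * (x + k) powr (2*H)" if "-2 \<le> k" for k
  proof -
    have "2 \<le> x" using assms by (simp add: x_def field_simps)
    moreover have "2*t + k*h = h * (x + k)" using assms by (simp add: x_def field_simps)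
    ultimately have "(2*t + k*h) powr (2*H) = (h * (x + k)) powr (2*H)" "0 \<le> x + k"
      using that by simp_all
    then show ?thesis using assms by (simp add: powr_mult)
  qed
  have "(2*t+2*h) powr (2*H) - 4*(2*t+h) powr (2*H) + 6*(2*t) powr (2*H)
      - 4*(2*t-h) powr (2*H) + (2*t-2*h) powr (2*H) = h powr (2*H) * fourth_difference (2*H) x"
    using scale[of 2] scale[of 1] scale[of 0] scale[of "-1"] scale[of "-2"]
    by (simp add: fourth_difference_def algebra_simps)
  moreover have "(2*h) powr (2*H) = 2 powr (2*H) * h powr (2*H)"
    using assms by (simp add: powr_mult)
  moreover have "(t+h) + (t+h) = 2*t+2*h" "t + t = 2*t" "(t-h) + (t-h) = 2*t-2*h"
    "(t+h) + t = 2*t+h" "(t+h) + (t-h) = 2*t" "t + (t-h) = 2*t-h"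
    "\<bar>(t+h) - t\<bar> = h" "\<bar>(t+h) - (t-h)\<bar> = 2*h" "\<bar>t - (t-h)\<bar> = h"
    using assms by simp_all
  ultimately show ?thesis
    unfolding subfbm_cov_def x_def[symmetric] by (simp add: algebra_simps)
qed

lemma integrable_mult_of_square_integrable:
  fixes f g :: "'a \<Rightarrow> real"
  assumes "f \<in> borel_measurable M" "g \<in> borel_measurable M"
    "integrable M (\<lambda>x. (f x)\<^sup>2)" "integrable M (\<lambda>x. (g x)\<^sup>2)"
  shows "integrable M (\<lambda>x. f x * g x)"
proof (rule Bochner_Integration.integrable_bound[where f="\<lambda>x. (f x)\<^sup>2 + (g x)\<^sup>2"])
  show "integrable M (\<lambda>x. (f x)\<^sup>2 + (g x)\<^sup>2)" "(\<lambda>x. f x * g x) \<in> borel_measurable M"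
    using assms by auto
  have "\<bar>f x * g x\<bar> \<le> (f x)\<^sup>2 + (g x)\<^sup>2" for x
  proof -
    have "2 * (\<bar>f x\<bar> * \<bar>g x\<bar>) \<le> (f x)\<^sup>2 + (g x)\<^sup>2"
      using sum_squares_bound[of "\<bar>f x\<bar>" "\<bar>g x\<bar>"] by (simp add: mult.assoc)
    moreover have "0 \<le> \<bar>f x\<bar> * \<bar>g x\<bar>" by simp
    ultimately show ?thesis unfolding abs_mult by linarith
  qed
  then show "AE x in M. norm (f x * g x) \<le> norm ((f x)\<^sup>2 + (g x)\<^sup>2)"
    by simp
qed

lemma integral_second_difference_sq:
  fixes X :: "'b \<Rightarrow> 'a \<Rightarrow> real"
  assumes "\<And>s. s \<in> {a, b, c} \<Longrightarrow> X s \<in> borel_measurable M \<and> integrable M (\<lambda>\<omega>. (X s \<omega>)\<^sup>2)"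
  defines "E \<equiv> \<lambda>s t. integral\<^sup>L M (\<lambda>\<omega>. X s \<omega> * X t \<omega>)"
  shows "integral\<^sup>L M (\<lambda>\<omega>. (X a \<omega> - 2 * X b \<omega> + X c \<omega>)\<^sup>2)
    = E a a + 4 * E b b + E c c - 4 * E a b + 2 * E a c - 4 * E b c"
proof -
  have I: "integrable M (\<lambda>\<omega>. X s \<omega> * X t \<omega>)" if "s \<in> {a, b, c}" "t \<in> {a, b, c}" for s t
    using assms that by (blast intro: integrable_mult_of_square_integrable)
  have "(\<lambda>\<omega>. (X a \<omega> - 2 * X b \<omega> + X c \<omega>)\<^sup>2) =
     (\<lambda>\<omega>. X a \<omega> * X a \<omega> + 4 * (X b \<omega> * X b \<omega>) + X c \<omega> * X c \<omega> - 4 * (X a \<omega> * X b \<omega>)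
       + 2 * (X a \<omega> * X c \<omega>) - 4 * (X b \<omega> * X c \<omega>))"
    by (simp add: power2_eq_square algebra_simps)
  then show ?thesis
    by (simp add: E_def I Bochner_Integration.integral_add Bochner_Integration.integral_diff)
qed

definition second_difference_deviation ::
    "'a measure \<Rightarrow> real \<Rightarrow> (real \<Rightarrow> 'a \<Rightarrow> real) \<Rightarrow> real \<Rightarrow> real \<Rightarrow> real" where
  "second_difference_deviation M H X h t =
     \<bar>integral\<^sup>L M (\<lambda>\<omega>. (X (t+h) \<omega> - 2 * X t \<omega> + X (t-h) \<omega>)\<^sup>2) / h powr (2*H)
      - (4 - 2 powr (2*H))\<bar>"

lemma sub_fbm_second_difference_deviation:
  assumes X: "sub_fbm M H X" and "0 < H" "0 < h" "h \<le> t"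
  shows "second_difference_deviation M H X h t = \<bar>fourth_difference (2*H) (2*t/h)\<bar> / 2"
proof -
  have "X s \<in> borel_measurable M \<and> integrable M (\<lambda>\<omega>. (X s \<omega>)\<^sup>2)" if "s \<in> {t+h, t, t-h}" for s
    using X assms that unfolding sub_fbm_def by auto
  moreover have "integral\<^sup>L M (\<lambda>\<omega>. X s \<omega> * X s' \<omega>) = subfbm_cov H s s'" if "0 \<le> s" "0 \<le> s'" for s s'
    using X that unfolding sub_fbm_def by blast
  ultimately have "integral\<^sup>L M (\<lambda>\<omega>. (X (t+h) \<omega> - 2 * X t \<omega> + X (t-h) \<omega>)\<^sup>2)
      = h powr (2*H) * ((4 - 2 powr (2*H)) - fourth_difference (2*H) (2*t/h) / 2)"
    using assms integral_second_difference_sq[of "t+h" t "t-h" X M]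
      subfbm_cov_second_difference[of h t H]
    by simp
  then show ?thesis using assms by (simp add: second_difference_deviation_def)
qed

lemma sub_fbm_SUP_second_difference_deviation:
  assumes "sub_fbm M H X" "0 < H" "0 < h" "h \<le> a"
  shows "(SUP t\<in>{a..b}. second_difference_deviation M H X h t)
    = (SUP x\<in>{2*a/h..2*b/h}. \<bar>fourth_difference (2*H) x\<bar> / 2)"
proof -
  have image: "{2*a/h..2*b/h} = (\<lambda>t. 2*t/h) ` {a..b}"
    using image_mult_atLeastAtMost[of "2/h" a b] assms by (simp add: image_def)
  have "second_difference_deviation M H X h t = \<bar>fourth_difference (2*H) (2*t/h)\<bar> / 2"
    if "t \<in> {a..b}" for t
    using assms that by (intro sub_fbm_second_difference_deviation) auto
  then show ?thesis
    unfolding image image_image by (intro SUP_cong) simp_all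
qed

lemma tendsto_SUP_atLeastAtMost_at_top:
  fixes f :: "real \<Rightarrow> real"
  assumes "bdd_above (f ` {a..})"
  shows "((\<lambda>b. SUP x\<in>{a..b}. f x) \<longlongrightarrow> (SUP x\<in>{a..}. f x)) at_top"
proof (rule tendstoI)
  fix e :: real
  assume "0 < e"
  then have "(SUP x\<in>{a..}. f x) - e < (SUP x\<in>{a..}. f x)"
    by simp
  then obtain x1 where x1: "a \<le> x1" "(SUP x\<in>{a..}. f x) - e < f x1"
    using less_cSUP_iff[of "{a..}" f, OF _ assms] by auto
  have "dist (SUP x\<in>{a..b}. f x) (SUP x\<in>{a..}. f x) < e" if "x1 \<le> b" for b
  proof -
    have bdd: "bdd_above (f ` {a..b})"
      using assms by (rule bdd_above_mono) auto
    have "f x1 \<le> (SUP x\<in>{a..b}. f x)"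
      using x1 that bdd by (intro cSUP_upper) auto
    moreover have "(SUP x\<in>{a..b}. f x) \<le> (SUP x\<in>{a..}. f x)"
      using x1 that assms by (intro cSUP_subset_mono) auto
    ultimately show ?thesis using x1 by (simp add: dist_real_def)
  qed
  then show "eventually (\<lambda>b. dist (SUP x\<in>{a..b}. f x) (SUP x\<in>{a..}. f x) < e) at_top"
    by (auto simp: eventually_at_top_linorder)
qed

lemma tendsto_SUP_atLeastAtMost_zero:
  fixes f :: "real \<Rightarrow> real"
  assumes "(f \<longlongrightarrow> 0) at_top" "\<And>x. 0 \<le> f x" "filterlim a at_top F"
    and "eventually (\<lambda>y. a y \<le> b y) F"
  shows "((\<lambda>y. SUP x\<in>{a y..b y}. f x) \<longlongrightarrow> 0) F"
proof (rule tendstoI)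
  fix e :: real
  assume "0 < e"
  then obtain x0 where x0: "\<And>x. x \<ge> x0 \<Longrightarrow> f x < e / 2"
    using tendstoD[OF assms(1), of "e/2"] assms(2) by (auto simp: eventually_at_top_linorder)
  have "eventually (\<lambda>y. x0 \<le> a y) F"
    using assms(3) by (simp add: filterlim_at_top)
  with assms(4) show "eventually (\<lambda>y. dist (SUP x\<in>{a y..b y}. f x) 0 < e) F"
  proof eventually_elim
    case (elim y)
    have small: "f x \<le> e / 2" if "x \<in> {a y..b y}" for x
      using elim that x0[of x] by auto
    then have "bdd_above (f ` {a y..b y})"
      by (intro bdd_aboveI2)
    then have "f (a y) \<le> (SUP x\<in>{a y..b y}. f x)"
      using elim by (intro cSUP_upper) auto
    then have "0 \<le> (SUP x\<in>{a y..b y}. f x)"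
      using assms(2) order.trans by blast
    moreover have "(SUP x\<in>{a y..b y}. f x) \<le> e / 2"
      using elim small by (intro cSUP_least) auto
    ultimately show ?case using \<open>0 < e\<close> by simp
  qed
qed

lemma tendsto_SUP_second_difference_deviation_pos:
  assumes X: "sub_fbm M H X" and H: "0 < H" "H < 1" "H \<noteq> 1/2" and "0 < T"
  shows "\<exists>L>0. ((\<lambda>h. SUP t\<in>{h..T-h}. second_difference_deviation M H X h t) \<longlongrightarrow> L) (at_right 0)"
proof -
  define f where "f x = \<bar>fourth_difference (2*H) x\<bar> / 2" for x
  have p: "0 < 2*H" "2*H < 2" "2*H \<noteq> 1" using H by auto
  have bdd: "bdd_above (f ` {2..})"
    using bdd_above_abs_fourth_difference[OF p] unfolding f_def bdd_above_def
    by (metis (no_types, lifting) divide_right_mono image_iff zero_le_numeral)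
  obtain x1 where x1: "2 \<le> x1" "fourth_difference (2*H) x1 \<noteq> 0"
    using eventually_happens'[OF _ eventually_conj[OF eventually_fourth_difference_nonzero[OF p]
      eventually_ge_at_top[of 2]]] by auto
  have "f x1 \<le> (SUP x\<in>{2..}. f x)"
    using x1 bdd by (intro cSUP_upper) auto
  then have "0 < (SUP x\<in>{2..}. f x)" using x1 by (simp add: f_def)
  moreover have "filterlim (\<lambda>h. 2*(T-h)/h) at_top (at_right 0)"
    using \<open>0 < T\<close> by real_asymp
  then have "((\<lambda>h. SUP x\<in>{2..2*(T-h)/h}. f x) \<longlongrightarrow> (SUP x\<in>{2..}. f x)) (at_right 0)"
    by (rule filterlim_compose[OF tendsto_SUP_atLeastAtMost_at_top[OF bdd]])
  moreover have "eventually (\<lambda>h. (SUP x\<in>{2..2*(T-h)/h}. f x)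
      = (SUP t\<in>{h..T-h}. second_difference_deviation M H X h t)) (at_right 0)"
    using eventually_at_right_less
    by (rule eventually_mono) (simp add: sub_fbm_SUP_second_difference_deviation[OF X H(1)] f_def)
  ultimately show ?thesis by (blast intro: Lim_transform_eventually)
qed

lemma Psi_eventually_le:
  assumes "\<phi> \<in> Psi T" "0 < T"
  shows "eventually (\<lambda>h. 0 < h \<and> h \<le> \<phi> h \<and> \<phi> h \<le> T - h) (at_right 0)"
proof -
  have "eventually (\<lambda>h. 0 < h \<and> h < T/2) (at_right 0)"
    using \<open>0 < T\<close> by (intro eventually_at_rightI[of 0 "T/2"]) auto
  moreover have "eventually (\<lambda>h. \<phi> h < T/2) (at_right 0)"
    using assms order_tendstoD(2)[of \<phi> 0 "at_right 0" "T/2"] unfolding Psi_def by simp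
  moreover have "eventually (\<lambda>h. 1 \<le> \<phi> h / h) (at_right 0)"
    using assms unfolding Psi_def by (simp add: filterlim_at_top)
  ultimately show ?thesis
    by eventually_elim (auto simp: field_simps)
qed

lemma tendsto_SUP_second_difference_deviation_Psi:
  assumes X: "sub_fbm M H X" and H: "0 < H" "H < 1" "H \<noteq> 1/2"
    and "\<phi> \<in> Psi T" "0 < T"
  shows "((\<lambda>h. SUP t\<in>{\<phi> h..T-h}. second_difference_deviation M H X h t) \<longlongrightarrow> 0) (at_right 0)"
proof -
  define f where "f x = \<bar>fourth_difference (2*H) x\<bar> / 2" for x
  have "0 < 2*H" "2*H < 2" "2*H \<noteq> 1" using H by auto
  then have f_lim: "(f \<longlongrightarrow> 0) at_top"
    using tendsto_divide[OF tendsto_rabs[OF tendsto_fourth_difference_at_top] tendsto_const, of _ 2]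
    by (simp add: f_def[abs_def])
  note ev = Psi_eventually_le[OF assms(5,6)]
  have "filterlim (\<lambda>h. 2 * (\<phi> h / h)) at_top (at_right 0)"
    using \<open>\<phi> \<in> Psi T\<close> unfolding Psi_def
    by (intro filterlim_tendsto_pos_mult_at_top[OF tendsto_const]) auto
  then have "((\<lambda>h. SUP x\<in>{2 * (\<phi> h / h)..2*(T-h)/h}. f x) \<longlongrightarrow> 0) (at_right 0)"
    using ev by (intro tendsto_SUP_atLeastAtMost_zero[OF f_lim _ _ eventually_mono[OF ev]])
      (auto simp: f_def divide_right_mono)
  moreover have "eventually (\<lambda>h. (SUP x\<in>{2 * (\<phi> h / h)..2*(T-h)/h}. f x)
      = (SUP t\<in>{\<phi> h..T-h}. second_difference_deviation M H X h t)) (at_right 0)"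
    using ev
    by (rule eventually_mono) (simp add: sub_fbm_SUP_second_difference_deviation[OF X H(1)] f_def)
  ultimately show ?thesis by (rule Lim_transform_eventually)
qed

theorem mainTheorem12:
  fixes M :: "'a measure" and X :: "real \<Rightarrow> 'a \<Rightarrow> real" and H T :: real
  assumes "0 < H" "H < 1" "H \<noteq> 1/2" "0 < T"
    and "sub_fbm M H X"
  shows "(\<exists>L>0. ((\<lambda>h. SUP t\<in>{h..T-h}.
            \<bar>integral\<^sup>L M (\<lambda>\<omega>. (X (t+h) \<omega> - 2 * X t \<omega> + X (t-h) \<omega>)\<^sup>2) / h powr (2*H)
             - (4 - 2 powr (2*H))\<bar>) \<longlongrightarrow> L) (at_right 0))
    \<and> (\<forall>\<phi>\<in>Psi T. ((\<lambda>h. SUP t\<in>{\<phi> h..T-h}.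
            \<bar>integral\<^sup>L M (\<lambda>\<omega>. (X (t+h) \<omega> - 2 * X t \<omega> + X (t-h) \<omega>)\<^sup>2) / h powr (2*H)
             - (4 - 2 powr (2*H))\<bar>) \<longlongrightarrow> 0) (at_right 0))"
  using tendsto_SUP_second_difference_deviation_pos[OF assms(5,1-4)]
    tendsto_SUP_second_difference_deviation_Psi[OF assms(5,1-3) _ assms(4)]
  unfolding second_difference_deviation_def by blast

end
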